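(* Let $A\in\mathbb{R}^{m\times n}$, $b\in\mathbb{R}^m$, $f(x)=\frac12\|Ax-b\|^2=\frac12x^tQx-x^tc+\frac12b^tb$ with $Q=A^tA$, $c=A^tb$. Suppose IMRO-2D is applied to minimizing $f$ from a starting point $x^0$. Then the sequence of iterates generated by IMRO-2D is the same as the sequence of iterates generated by the linear conjugate gradient method for minimizing $\frac12x^tQx-x^tc$ started at $x^0$.
   Context: IMRO-2D applied to $f$ (with no $\ell_1$ term) is the following iteration. Let $r^0=\nabla f(x^0)=Qx^0-c$, $\sigma_0=\frac{(r^0)^tQr^0}{(r^0)^tr^0}$ and $x^1=x^0-\frac{1}{\sigma_0}r^0$. For $k\ge1$, with $r^k=\nabla f(x^k)$ and $d^k=x^k-x^{k-1}$, one chooses a scalar $\sigma_k$ and a vector $u_k\in\mathrm{span}\{r^k,d^k\}$ such that $H_k=\sigma_k\mathbf I-u_ku_k^t$ is positive definite and $w^tH_kw=w^tQw$ for all $w\in\mathrm{span}\{r^k,d^k\}$ (i.e. the quadratic model $f(x^k)+\langle\nabla f(x^k),x-x^k\rangle+\frac12(x-x^k)^tH_k(x-x^k)$ coincides with $f$ on $x^k+\mathrm{span}\{r^k,d^k\}$), and sets $x^{k+1}=x^k-H_k^{-1}r^k$, the minimizer of that quadratic model. The statement concerns iterates for which this construction is well defined. The linear conjugate gradient method is the standard one: $p^0=-r^0$, $\alpha_k=\frac{(r^k)^tr^k}{(p^k)^tQp^k}$, $x^{k+1}=x^k+\alpha_kp^k$, $r^{k+1}=r^k+\alpha_kQp^k$,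 $p^{k+1}=-r^{k+1}+\frac{(r^{k+1})^tr^{k+1}}{(r^k)^tr^k}p^k$. *)

theory Defs
  imports "HOL-Analysis.Analysis"
begin

definition outer :: "real^'n \<Rightarrow> real^'n^'n" where
  "outer u = (\<chi> i j. u$i * u$j)"

definition pos_def :: "real^'n^'n \<Rightarrow> bool" where
  "pos_def H \<longleftrightarrow> (\<forall>w. w \<noteq> 0 \<longrightarrow> w \<bullet> (H *v w) > 0)"

text \<open>Linear conjugate gradient for min 1/2 x^t Q x - x^t c started at x0:
  the k-th state is (x^k, r^k, p^k).\<close>
fun cg :: "real^'n^'n \<Rightarrow> real^'n \<Rightarrow> real^'n \<Rightarrow> nat \<Rightarrow> (real^'n) \<times> (real^'n) \<times> (real^'n)" where
  "cg Q c x0 0 = (x0, Q *v x0 - c, - (Q *v x0 - c))"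
| "cg Q c x0 (Suc k) =
     (let (x, r, p) = cg Q c x0 k;
          \<alpha> = (r \<bullet> r) / (p \<bullet> (Q *v p));
          x' = x + \<alpha> *\<^sub>R p;
          r' = r + \<alpha> *\<^sub>R (Q *v p);
          p' = - r' + ((r' \<bullet> r') / (r \<bullet> r)) *\<^sub>R p
      in (x', r', p'))"

definition cg_iter :: "real^'n^'n \<Rightarrow> real^'n \<Rightarrow> real^'n \<Rightarrow> nat \<Rightarrow> real^'n" where
  "cg_iter Q c x0 k = fst (cg Q c x0 k)"

text \<open>IMRO-2D applied to f(x) = 1/2 x^t Q x - x^t c + const (no l1 term):
  x is a sequence of IMRO-2D iterates started at x0 (with some admissible
  choice of sigma_k, u_k at every step k >= 1).\<close>
definition imro2d_seq :: "real^'n^'n \<Rightarrow> real^'n \<Rightarrow> real^'n \<Rightarrow> (nat \<Rightarrow> real^'n) \<Rightarrow> bool" where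
  "imro2d_seq Q c x0 x \<longleftrightarrow>
     (let r = (\<lambda>k. Q *v x k - c) in
      x 0 = x0 \<and>
      x 1 = x 0 - (1 / ((r 0 \<bullet> (Q *v r 0)) / (r 0 \<bullet> r 0))) *\<^sub>R r 0 \<and>
      (\<forall>k\<ge>1. \<exists>(\<sigma>::real) u.
          let d = x k - x (k - 1); H = \<sigma> *\<^sub>R mat 1 - outer u in
          u \<in> span {r k, d} \<and> pos_def H \<and>
          (\<forall>w \<in> span {r k, d}. w \<bullet> (H *v w) = w \<bullet> (Q *v w)) \<and>
          x (Suc k) = x k - matrix_inv H *v r k))"

end

theory Submission
  imports Defs
begin

text \<open>
  Both methods start with the same exact line search along \<open>-r\<^sup>0\<close>. For \<open>k \<ge> 1\<close> the
  IMRO-2D model agrees with \<open>f\<close> on the plane \<open>V = span {r\<^sup>k, d\<^sup>k}\<close>, and \<open>H\<^sub>k\<close> maps \<open>V\<close>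
  into itself because \<open>u\<^sub>k \<in> V\<close>; so the model step is the minimiser of \<open>f\<close> over
  \<open>x\<^sup>k + V\<close>. The CG step \<open>\<alpha>\<^sub>k p\<^sup>k\<close> lies in \<open>V\<close> (as \<open>p\<^sup>k\<close> is a combination of \<open>r\<^sup>k\<close> and
  \<open>p\<^sup>k\<^sup>-\<^sup>1 \<parallel> d\<^sup>k\<close>), and the new residual is orthogonal to \<open>r\<^sup>k\<close> and \<open>p\<^sup>k\<^sup>-\<^sup>1\<close>, so it is
  that minimiser. For \<open>Q = A\<^sup>tA\<close>, \<open>c = A\<^sup>tb\<close> a direction of zero curvature is one along
  which \<open>f\<close> is constant, which keeps CG from breaking down before it converges.
\<close>

lemma matrix_vector_mult_uminus:
  fixes M :: "'a::ring_1^'n^'m"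
  shows "M *v (- v) = - (M *v v)"
  using matrix_vector_mult_diff_distrib[of M 0 v] by simp

lemma inner_symmetric_matrix:
  fixes M :: "real^'n^'n"
  assumes "transpose M = M"
  shows "v \<bullet> (M *v w) = (M *v v) \<bullet> w"
  by (metis assms dot_lmul_matrix transpose_matrix_vector)

lemma outer_apply: "outer u *v w = (u \<bullet> w) *\<^sub>R u"
  by (simp add: vec_eq_iff matrix_vector_mult_def outer_def inner_vec_def
      sum_distrib_left sum_distrib_right mult_ac)

lemma rank_one_update_apply:
  "(\<sigma> *\<^sub>R mat 1 - outer u) *v w = \<sigma> *\<^sub>R w - (u \<bullet> w) *\<^sub>R u"
  by (simp add: outer_apply matrix_vector_mult_diff_rdistrib flip: scaleR_matrix_vector_assoc)

lemma transpose_rank_one_update: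
  "transpose (\<sigma> *\<^sub>R mat 1 - outer u) = \<sigma> *\<^sub>R mat 1 - outer u"
  by (simp add: vec_eq_iff transpose_def outer_def mat_def mult.commute)

lemma pos_def_invertible:
  fixes H :: "real^'n^'n"
  assumes "pos_def H"
  shows "invertible H"
proof -
  have "H *v w = 0 \<Longrightarrow> w = 0" for w
    using assms unfolding pos_def_def by force
  then show ?thesis
    using matrix_left_invertible_ker invertible_left_inverse by blast
qed

lemma pos_def_matrix_inv_right:
  fixes H :: "real^'n^'n"
  assumes "pos_def H"
  shows "H *v (matrix_inv H *v r) = r"
proof -
  have "H ** matrix_inv H = mat 1 \<and> matrix_inv H ** H = mat 1"
    using pos_def_invertible[OF assms] unfolding invertible_def matrix_inv_def by (rule someI_ex)
  then show ?thesis by (simp add: matrix_vector_mul_assoc)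
qed

lemma quadratic_form_polarization:
  fixes H Q :: "real^'n^'n"
  assumes "transpose H = H" "transpose Q = Q" "subspace V"
    and agree: "\<And>w. w \<in> V \<Longrightarrow> w \<bullet> (H *v w) = w \<bullet> (Q *v w)"
    and "v \<in> V" "w \<in> V"
  shows "v \<bullet> (H *v w) = v \<bullet> (Q *v w)"
proof -
  have "v + w \<in> V" using assms by (simp add: subspace_add)
  then have "(v + w) \<bullet> (H *v (v + w)) = (v + w) \<bullet> (Q *v (v + w))" by (rule agree)
  moreover have "w \<bullet> (H *v v) = v \<bullet> (H *v w)" "w \<bullet> (Q *v v) = v \<bullet> (Q *v w)"
    using inner_symmetric_matrix[OF assms(1), of w v] inner_symmetric_matrix[OF assms(2), of w v]
    by (simp_all add: inner_commute)
  ultimately show ?thesis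
    using agree \<open>v \<in> V\<close> \<open>w \<in> V\<close>
    by (simp add: matrix_vector_right_distrib inner_add_left inner_add_right)
qed

text \<open>The last hypothesis says that \<open>t\<close> minimises \<open>w \<mapsto> \<onehalf> w\<^sup>tQw + r\<^sup>tw\<close> over \<open>V\<close>.\<close>

lemma model_step_eq_subspace_minimizer:
  fixes H Q :: "real^'n^'n"
  assumes "transpose H = H" "transpose Q = Q" "pos_def H" "subspace V"
    and invariant: "\<And>v. v \<in> V \<Longrightarrow> H *v v \<in> V"
    and agree: "\<And>w. w \<in> V \<Longrightarrow> w \<bullet> (H *v w) = w \<bullet> (Q *v w)"
    and "r \<in> V" "t \<in> V"
    and stationary: "\<And>w. w \<in> V \<Longrightarrow> w \<bullet> (Q *v t + r) = 0"
  shows "matrix_inv H *v r = - t"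
proof -
  define y where "y = H *v t + r"
  have "y \<in> V"
    unfolding y_def using assms by (simp add: invariant subspace_add)
  have "y \<bullet> y = y \<bullet> (Q *v t + r)"
    using quadratic_form_polarization[OF assms(1,2,4) agree \<open>y \<in> V\<close> \<open>t \<in> V\<close>]
    by (simp add: y_def inner_add_right)
  also have "\<dots> = 0" using stationary \<open>y \<in> V\<close> .
  finally have "H *v t = - r" by (simp add: y_def eq_neg_iff_add_eq_0)
  then have "H *v (matrix_inv H *v r + t) = 0"
    by (simp add: matrix_vector_right_distrib pos_def_matrix_inv_right[OF \<open>pos_def H\<close>])
  then have "matrix_inv H *v r + t = 0"
    using \<open>pos_def H\<close> unfolding pos_def_def by (metis inner_zero_right less_irrefl)
  then show ?thesis by (simp add: eq_neg_iff_add_eq_0)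
qed

definition cg_residual :: "real^'n^'n \<Rightarrow> real^'n \<Rightarrow> real^'n \<Rightarrow> nat \<Rightarrow> real^'n" where
  "cg_residual Q c x0 k = fst (snd (cg Q c x0 k))"

definition cg_direction :: "real^'n^'n \<Rightarrow> real^'n \<Rightarrow> real^'n \<Rightarrow> nat \<Rightarrow> real^'n" where
  "cg_direction Q c x0 k = snd (snd (cg Q c x0 k))"

definition cg_stepsize :: "real^'n^'n \<Rightarrow> real^'n \<Rightarrow> real^'n \<Rightarrow> nat \<Rightarrow> real" where
  "cg_stepsize Q c x0 k =
     (cg_residual Q c x0 k \<bullet> cg_residual Q c x0 k) /
     (cg_direction Q c x0 k \<bullet> (Q *v cg_direction Q c x0 k))"

lemma cg_0:
  "cg_iter Q c x0 0 = x0"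
  "cg_residual Q c x0 0 = Q *v x0 - c"
  "cg_direction Q c x0 0 = - (Q *v x0 - c)"
  by (simp_all add: cg_iter_def cg_residual_def cg_direction_def)

lemma cg_Suc:
  "cg_iter Q c x0 (Suc k) = cg_iter Q c x0 k + cg_stepsize Q c x0 k *\<^sub>R cg_direction Q c x0 k"
  "cg_residual Q c x0 (Suc k) =
     cg_residual Q c x0 k + cg_stepsize Q c x0 k *\<^sub>R (Q *v cg_direction Q c x0 k)"
  "cg_direction Q c x0 (Suc k) =
     - cg_residual Q c x0 (Suc k) +
     ((cg_residual Q c x0 (Suc k) \<bullet> cg_residual Q c x0 (Suc k)) /
      (cg_residual Q c x0 k \<bullet> cg_residual Q c x0 k)) *\<^sub>R cg_direction Q c x0 k"
  by (simp_all add: cg_iter_def cg_residual_def cg_direction_def cg_stepsize_def Let_def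
      split: prod.split)

locale cg_problem =
  fixes Q :: "real^'n^'n" and c :: "real^'n"
  assumes symmetric: "transpose Q = Q"
    and null_curvature: "p \<bullet> (Q *v p) = 0 \<Longrightarrow> Q *v p = 0 \<and> c \<bullet> p = 0"
begin

lemma gradient_orthogonal_null_curvature:
  assumes "p \<bullet> (Q *v p) = 0"
  shows "(Q *v x - c) \<bullet> p = 0"
proof -
  have "(Q *v x) \<bullet> p = x \<bullet> (Q *v p)"
    using inner_symmetric_matrix[OF symmetric, of x p] by simp
  then show ?thesis
    using null_curvature[OF assms] by (simp add: inner_diff_left)
qed

lemma cg_step_orthogonality:
  assumes gradient: "r = Q *v x - c"
    and descent: "r \<bullet> p = - (r \<bullet> r)"
    and conjugate: "r \<bullet> (Q *v p) = - (p \<bullet> (Q *v p))"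
    and \<alpha>: "\<alpha> = (r \<bullet> r) / (p \<bullet> (Q *v p))"
    and r': "r' = r + \<alpha> *\<^sub>R (Q *v p)"
    and p': "p' = - r' + ((r' \<bullet> r') / (r \<bullet> r)) *\<^sub>R p"
  shows "r' \<bullet> p = 0" "r' \<bullet> r = 0" "p' \<bullet> (Q *v p) = 0"
proof -
  have "r' \<bullet> p = 0 \<and> r' \<bullet> r = 0 \<and> p' \<bullet> (Q *v p) = 0"
  proof (cases "r = 0")
    case True
    then show ?thesis using \<alpha> r' p' by simp
  next
    case False
    define q where "q = p \<bullet> (Q *v p)"
    have "q \<noteq> 0"
      using gradient_orthogonal_null_curvature[of p x] gradient descent False
      by (auto simp: q_def)
    then have \<alpha>q: "\<alpha> * q = r \<bullet> r" by (simp add: \<alpha> q_def)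
    have "r' \<bullet> p = r \<bullet> p + \<alpha> * q"
      by (simp add: r' q_def inner_add_left inner_commute[of "Q *v p" p])
    then have "r' \<bullet> p = 0" using descent \<alpha>q by simp
    have "r' \<bullet> r = r \<bullet> r + \<alpha> * (r \<bullet> (Q *v p))"
      by (simp add: r' inner_add_left inner_commute[of "Q *v p" r])
    then have "r' \<bullet> r = 0" using conjugate \<alpha>q by (simp add: q_def)
    have "r' \<bullet> r' = r' \<bullet> r + \<alpha> * (r' \<bullet> (Q *v p))"
      by (simp add: r' inner_add_right)
    then have "r' \<bullet> (Q *v p) = (r' \<bullet> r') / (r \<bullet> r) * q"
      using \<open>r' \<bullet> r = 0\<close> \<alpha>q \<open>q \<noteq> 0\<close> False by (auto simp: field_simps)
    then have "p' \<bullet> (Q *v p) = 0"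
      by (simp add: p' q_def inner_add_left inner_diff_left)
    with \<open>r' \<bullet> p = 0\<close> \<open>r' \<bullet> r = 0\<close> show ?thesis by blast
  qed
  then show "r' \<bullet> p = 0" "r' \<bullet> r = 0" "p' \<bullet> (Q *v p) = 0" by blast+
qed

lemma cg_step_descent_conjugacy:
  assumes "r' \<bullet> p = 0" "p' \<bullet> (Q *v p) = 0"
    and p': "p' = - r' + \<beta> *\<^sub>R p"
  shows "r' \<bullet> p' = - (r' \<bullet> r')" "r' \<bullet> (Q *v p') = - (p' \<bullet> (Q *v p'))"
proof -
  show "r' \<bullet> p' = - (r' \<bullet> r')"
    using assms(1) by (simp add: p' inner_add_right inner_diff_right)
  have "p \<bullet> (Q *v p') = p' \<bullet> (Q *v p)"
    using inner_symmetric_matrix[OF symmetric, of p p'] by (simp add: inner_commute)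
  moreover have "r' = - p' + \<beta> *\<^sub>R p" using p' by simp
  ultimately show "r' \<bullet> (Q *v p') = - (p' \<bullet> (Q *v p'))"
    using assms(2) by (simp add: inner_add_left inner_diff_left)
qed

end

locale cg_run = cg_problem Q c for Q :: "real^'n^'n" and c +
  fixes x0 :: "real^'n"
begin

abbreviation "iterate k \<equiv> cg_iter Q c x0 k"
abbreviation "residual k \<equiv> cg_residual Q c x0 k"
abbreviation "direction k \<equiv> cg_direction Q c x0 k"
abbreviation "stepsize k \<equiv> cg_stepsize Q c x0 k"

lemma residual_eq_gradient: "residual k = Q *v iterate k - c"
  by (induction k) (simp_all add: cg_0 cg_Suc algebra_simps)

lemma descent_conjugacy:
  "residual k \<bullet> direction k = - (residual k \<bullet> residual k)"
  "residual k \<bullet> (Q *v direction k) = - (direction k \<bullet> (Q *v direction k))"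
proof (induction k)
  case 0
  have "r \<bullet> - r = - (r \<bullet> r)" "r \<bullet> (Q *v - r) = - (- r \<bullet> (Q *v - r))" for r
    by (simp_all add: matrix_vector_mult_uminus)
  then show "residual 0 \<bullet> direction 0 = - (residual 0 \<bullet> residual 0)"
    "residual 0 \<bullet> (Q *v direction 0) = - (direction 0 \<bullet> (Q *v direction 0))"
    unfolding cg_0 by blast+
next
  case (Suc k)
  note step = cg_step_orthogonality[OF residual_eq_gradient Suc cg_stepsize_def cg_Suc(2,3)]
  show "residual (Suc k) \<bullet> direction (Suc k) = - (residual (Suc k) \<bullet> residual (Suc k))"
    "residual (Suc k) \<bullet> (Q *v direction (Suc k)) =
       - (direction (Suc k) \<bullet> (Q *v direction (Suc k)))"
    by (rule cg_step_descent_conjugacy[OF step(1,3) cg_Suc(3)])+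
qed

lemma cg_orthogonality:
  "residual (Suc k) \<bullet> direction k = 0"
  "residual (Suc k) \<bullet> residual k = 0"
  "direction (Suc k) \<bullet> (Q *v direction k) = 0"
  by (rule cg_step_orthogonality[OF residual_eq_gradient descent_conjugacy
        cg_stepsize_def cg_Suc(2,3)])+

text \<open>Once CG has converged, the junk value \<open>0 / 0 = 0\<close> of the stepsize keeps it there.\<close>

lemma residual_Suc_eq_0: "residual k = 0 \<Longrightarrow> residual (Suc k) = 0"
  by (simp add: cg_Suc cg_stepsize_def)

lemma stepsize_nonzero:
  assumes "residual k \<noteq> 0"
  shows "stepsize k \<noteq> 0"
proof -
  have "direction k \<bullet> (Q *v direction k) \<noteq> 0"
    using gradient_orthogonal_null_curvature[of "direction k" "iterate k"]
      descent_conjugacy(1)[of k] assms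
    by (auto simp flip: residual_eq_gradient)
  then show ?thesis using assms by (simp add: cg_stepsize_def)
qed

lemma scaled_direction_in_span:
  "stepsize (Suc k) *\<^sub>R direction (Suc k) \<in> span {residual (Suc k), iterate (Suc k) - iterate k}"
proof (cases "residual (Suc k) = 0")
  case True
  then show ?thesis by (simp add: cg_stepsize_def span_zero)
next
  case False
  then have "stepsize k \<noteq> 0" using residual_Suc_eq_0 stepsize_nonzero by blast
  define \<beta> where "\<beta> = (residual (Suc k) \<bullet> residual (Suc k)) / (residual k \<bullet> residual k)"
  have "iterate (Suc k) - iterate k = stepsize k *\<^sub>R direction k"
    by (simp add: cg_Suc(1))
  then have "direction (Suc k) =
      - residual (Suc k) + (\<beta> / stepsize k) *\<^sub>R (iterate (Suc k) - iterate k)"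
    using \<open>stepsize k \<noteq> 0\<close> by (simp add: cg_Suc(3)[of Q c x0 k] \<beta>_def)
  then show ?thesis
    by (simp only:) (intro span_scale span_add span_neg span_base; simp)
qed

lemma residual_orthogonal_previous_span:
  assumes "w \<in> span {residual (Suc k), iterate (Suc k) - iterate k}"
  shows "w \<bullet> residual (Suc (Suc k)) = 0"
proof -
  have "direction k \<bullet> (Q *v direction (Suc k)) = direction (Suc k) \<bullet> (Q *v direction k)"
    using inner_symmetric_matrix[OF symmetric, of "direction k" "direction (Suc k)"]
    by (simp add: inner_commute)
  then have "direction k \<bullet> residual (Suc (Suc k)) = 0"
    using cg_orthogonality(1,3)[of k]
    by (simp add: cg_Suc(2)[of Q c x0 "Suc k"] inner_add_right
        inner_commute[of "direction k" "residual (Suc k)"])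
  then have "orthogonal (residual (Suc (Suc k))) v"
    if "v \<in> {residual (Suc k), iterate (Suc k) - iterate k}" for v
    using that cg_orthogonality(2)[of "Suc k"]
    by (auto simp: orthogonal_def cg_Suc(1) inner_commute[of _ "direction k"])
  then have "orthogonal (residual (Suc (Suc k))) w"
    by (rule orthogonal_to_span[OF assms])
  then show ?thesis by (simp add: orthogonal_def inner_commute)
qed

lemma imro2d_step_eq_cg_step:
  fixes k :: nat and u :: "real^'n" and \<sigma> :: real
  defines "V \<equiv> span {residual (Suc k), iterate (Suc k) - iterate k}"
    and "H \<equiv> \<sigma> *\<^sub>R mat 1 - outer u"
  assumes "u \<in> V" "pos_def H" "\<forall>w\<in>V. w \<bullet> (H *v w) = w \<bullet> (Q *v w)"
  shows "iterate (Suc k) - matrix_inv H *v residual (Suc k) = iterate (Suc (Suc k))"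
proof -
  have "matrix_inv H *v residual (Suc k) = - (stepsize (Suc k) *\<^sub>R direction (Suc k))"
  proof (rule model_step_eq_subspace_minimizer[of H Q V])
    show "transpose H = H" by (simp add: H_def transpose_rank_one_update)
    show "H *v v \<in> V" if "v \<in> V" for v
      using that \<open>u \<in> V\<close> by (simp add: H_def V_def rank_one_update_apply span_diff span_scale)
    show "residual (Suc k) \<in> V" by (simp add: V_def span_base)
    show "stepsize (Suc k) *\<^sub>R direction (Suc k) \<in> V"
      unfolding V_def by (rule scaled_direction_in_span)
    have "Q *v (stepsize (Suc k) *\<^sub>R direction (Suc k)) + residual (Suc k) =
        residual (Suc (Suc k))"
      by (simp add: cg_Suc(2)[of Q c x0 "Suc k"] matrix_vector_mult_scaleR)
    then show "w \<bullet> (Q *v (stepsize (Suc k) *\<^sub>R direction (Suc k)) + residual (Suc k)) = 0"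
      if "w \<in> V" for w
      using that residual_orthogonal_previous_span by (simp add: V_def)
  qed (use assms symmetric in \<open>simp_all add: V_def subspace_span\<close>)
  then show ?thesis by (simp add: cg_Suc(1))
qed

lemma imro2d_seq_eq_cg:
  assumes "imro2d_seq Q c x0 y"
  shows "y k = iterate k"
proof -
  have y0: "y 0 = x0"
    and y1: "y 1 = y 0 - (1 / (((Q *v y 0 - c) \<bullet> (Q *v (Q *v y 0 - c))) /
        ((Q *v y 0 - c) \<bullet> (Q *v y 0 - c)))) *\<^sub>R (Q *v y 0 - c)"
    and steps: "\<forall>k\<ge>1. \<exists>\<sigma> u.
      u \<in> span {Q *v y k - c, y k - y (k - 1)} \<and> pos_def (\<sigma> *\<^sub>R mat 1 - outer u) \<and>
      (\<forall>w\<in>span {Q *v y k - c, y k - y (k - 1)}.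
         w \<bullet> ((\<sigma> *\<^sub>R mat 1 - outer u) *v w) = w \<bullet> (Q *v w)) \<and>
      y (Suc k) = y k - matrix_inv (\<sigma> *\<^sub>R mat 1 - outer u) *v (Q *v y k - c)"
    using assms unfolding imro2d_seq_def Let_def by blast+
  have "y k = iterate k \<and> y (Suc k) = iterate (Suc k)"
  proof (induction k)
    case 0
    define r where "r = Q *v x0 - c"
    have "iterate 1 = x0 + ((r \<bullet> r) / (- r \<bullet> (Q *v - r))) *\<^sub>R - r"
      by (simp only: One_nat_def cg_Suc(1) cg_stepsize_def cg_0 r_def)
    also have "\<dots> = x0 - (1 / ((r \<bullet> (Q *v r)) / (r \<bullet> r))) *\<^sub>R r"
      by (simp add: matrix_vector_mult_uminus)
    finally show ?case
      using y0 y1 by (simp add: cg_0 r_def)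
  next
    case (Suc k)
    then have "Q *v y (Suc k) - c = residual (Suc k)" "y (Suc k) - y k = iterate (Suc k) - iterate k"
      by (simp_all add: residual_eq_gradient)
    moreover obtain \<sigma> u where
      "u \<in> span {Q *v y (Suc k) - c, y (Suc k) - y k}" "pos_def (\<sigma> *\<^sub>R mat 1 - outer u)"
      "\<forall>w\<in>span {Q *v y (Suc k) - c, y (Suc k) - y k}.
         w \<bullet> ((\<sigma> *\<^sub>R mat 1 - outer u) *v w) = w \<bullet> (Q *v w)"
      "y (Suc (Suc k)) = y (Suc k) - matrix_inv (\<sigma> *\<^sub>R mat 1 - outer u) *v (Q *v y (Suc k) - c)"
      using steps[rule_format, of "Suc k"] by auto
    ultimately show ?case
      using Suc imro2d_step_eq_cg_step[of u k \<sigma>] by simp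
  qed
  then show ?thesis ..
qed

end

lemma least_squares_cg_problem:
  fixes A :: "real^'n^'m" and b :: "real^'m"
  shows "cg_problem (transpose A ** A) (transpose A *v b)"
proof
  show "transpose (transpose A ** A) = transpose A ** A"
    by (simp add: matrix_transpose_mul)
  fix p :: "real^'n"
  have Qp: "(transpose A ** A) *v p = (A *v p) v* A"
    by (simp flip: matrix_vector_mul_assoc)
  assume "p \<bullet> ((transpose A ** A) *v p) = 0"
  then have "A *v p = 0"
    by (simp add: Qp inner_commute[of p] dot_lmul_matrix)
  then show "(transpose A ** A) *v p = 0 \<and> (transpose A *v b) \<bullet> p = 0"
    by (simp add: Qp dot_lmul_matrix)
qed

theorem theorem1:
  fixes A :: "real^'n^'m" and b :: "real^'m" and x0 :: "real^'n"
    and x :: "nat \<Rightarrow> real^'n"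
  assumes "imro2d_seq (transpose A ** A) (transpose A *v b) x0 x"
  shows "\<forall>k. x k = cg_iter (transpose A ** A) (transpose A *v b) x0 k"
proof -
  interpret cg_run "transpose A ** A" "transpose A *v b" x0
    using least_squares_cg_problem by (simp add: cg_run_def)
  show ?thesis using imro2d_seq_eq_cg[OF assms] by blast
qed

end
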